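(* Let $\alpha\in(0,1)$, $\gamma,\beta>0$, $r_0>0$, $Y=B(0,r_0)\subset\mathbb R\oplus\mathbb R^{d-1}$, $\mathcal X(x)=\|x\|^\alpha Ax$ with $A=\gamma\,\mathrm{Id}_{\mathbb R}\oplus(-\beta\,\mathrm{Id}_{\mathbb R^{d-1}})$. For a trajectory $x(t)$ of $\mathcal X$ in $Y$, with $\theta(t)$ the angle between $x(t)$ and $\mathbb R\times\{0\}$ ($\tan\theta=\|x_s\|/\|x_u\|$), $$\frac{d}{dt}\|x\|^{-\alpha}=\alpha(\beta\sin^2\theta-\gamma\cos^2\theta)=\alpha\xi(\tan\theta),\qquad \xi(s)=\frac{\beta s^2-\gamma}{s^2+1}.$$ In particular, for every piece of trajectory $x\colon[0,T]\to Y$ and $t\in[0,T]$: $-\gamma\alpha\le\frac{d}{dt}\|x\|^{-\alpha}\le\beta\alpha$, $\|x(t)\|^{-\alpha}\le\|x(T)\|^{-\alpha}+\gamma\alpha(T-t)$, and $\|x(t)\|^{-\alpha}\le\|x(0)\|^{-\alpha}+\beta\alpha t$. Moreover, if $x\colon[0,T_0]\to Y$ enters $Y$ at time $0$ and leaves it at time $T_0$ (so $\|x(0)\|=\|x(T_0)\|=r_0$), and $s$ satisfies $\tan\theta(0)>s>\tan\theta(T_0)$ with $T_s$ the time at which $\tan\theta(T_s)=s$, then $\|x(t)\|^{-\alpha}\ge r_0^{-\alpha}+\alpha\xi(s)t$ for all $t\in[0,T_s]$ and $\|x(t)\|^{-\alpha}\ge r_0^{-\alpha}-\alpha\xi(s)(T_0-t)$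 for all $t\in[T_s,T_0]$.
   Context: $T_s$ is well defined because $\tan\theta$ is strictly decreasing along trajectories in $Y$. *)

theory Defs
  imports "HOL-Analysis.Analysis"
begin

text \<open>The space R (+) R^(d-1) is modelled as real \<times> 'b with 'b a Euclidean space
  (the stable factor R^(d-1)); the product norm is the Euclidean norm.
  First component = unstable coordinate x_u, second = stable coordinate x_s.\<close>

definition linA :: "real \<Rightarrow> real \<Rightarrow> real \<times> 'b::euclidean_space \<Rightarrow> real \<times> 'b" where
  "linA \<gamma> \<beta> p = (\<gamma> * fst p, - \<beta> *\<^sub>R snd p)"

definition VF :: "real \<Rightarrow> real \<Rightarrow> real \<Rightarrow> real \<times> 'b::euclidean_space \<Rightarrow> real \<times> 'b" where
  "VF \<alpha> \<gamma> \<beta> p = (norm p powr \<alpha>) *\<^sub>R linA \<gamma> \<beta> p"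

definition theta :: "real \<times> 'b::euclidean_space \<Rightarrow> real" where
  "theta p = arccos (\<bar>fst p\<bar> / norm p)"

definition xi :: "real \<Rightarrow> real \<Rightarrow> real \<Rightarrow> real" where
  "xi \<gamma> \<beta> s = (\<beta> * s\<^sup>2 - \<gamma>) / (s\<^sup>2 + 1)"

definition is_traj :: "real \<Rightarrow> real \<Rightarrow> real \<Rightarrow> (real \<Rightarrow> real \<times> 'b::euclidean_space) \<Rightarrow> real \<Rightarrow> bool" where
  "is_traj \<alpha> \<gamma> \<beta> x T \<longleftrightarrow>
     (\<forall>t\<in>{0..T}. (x has_vector_derivative VF \<alpha> \<gamma> \<beta> (x t)) (at t within {0..T}))"

end

theory Submission
  imports Defs
begin

text \<open>Along the flow, \<open>\<langle>x, \<X>(x)\<rangle> = \<parallel>x\<parallel>\<^sup>\<alpha> (\<gamma> x\<^sub>u\<^sup>2 - \<beta> \<parallel>x\<^sub>s\<parallel>\<^sup>2)\<close>, so the chain rule gives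
  \<open>d/dt \<parallel>x\<parallel>\<^sup>-\<^sup>\<alpha> = \<alpha> (\<beta> sin\<^sup>2 \<theta> - \<gamma> cos\<^sup>2 \<theta>) = \<alpha> (\<beta> - (\<beta> + \<gamma>) cos\<^sup>2 \<theta>)\<close>, a rate lying in
  \<open>[-\<gamma>\<alpha>, \<beta>\<alpha>]\<close>; the mean value theorem turns this into the upper bounds.
  Moreover \<open>cos\<^sup>2 \<theta> = x\<^sub>u\<^sup>2 / \<parallel>x\<parallel>\<^sup>2\<close> has derivative \<open>2 (\<gamma> + \<beta>) \<parallel>x\<parallel>\<^sup>\<alpha> x\<^sub>u\<^sup>2 \<parallel>x\<^sub>s\<parallel>\<^sup>2 / \<parallel>x\<parallel>\<^sup>4 \<ge> 0\<close>,
  so the rate is nonincreasing in time. At \<open>T\<^sub>s\<close> it equals \<open>\<alpha> \<xi>(s)\<close>, hence it is at least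
  \<open>\<alpha> \<xi>(s)\<close> before \<open>T\<^sub>s\<close> and at most \<open>\<alpha> \<xi>(s)\<close> after, and the mean value theorem on
  \<open>[0, T\<^sub>s]\<close> and \<open>[T\<^sub>s, T\<^sub>0]\<close> gives the lower bounds.\<close>

lemma has_real_derivative_norm_powr:
  fixes x :: "real \<Rightarrow> 'a::real_inner"
  assumes "(x has_vector_derivative v) (at t within S)" "x t \<noteq> 0"
  shows "((\<lambda>\<tau>. norm (x \<tau>) powr c) has_real_derivative
           c * norm (x t) powr (c - 2) * inner (x t) v) (at t within S)"
proof -
  have inner_deriv: "((\<lambda>\<tau>. inner (x \<tau>) (x \<tau>)) has_real_derivative 2 * inner (x t) v) (at t within S)"
    using has_derivative_inner[OF assms(1)[unfolded has_vector_derivative_def]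
        assms(1)[unfolded has_vector_derivative_def]]
    by (auto intro!: has_derivative_imp_has_field_derivative simp: inner_commute)
  have "((\<lambda>\<tau>. inner (x \<tau>) (x \<tau>) powr (c / 2)) has_real_derivative
          c / 2 * inner (x t) (x t) powr (c / 2 - 1) * (2 * inner (x t) v)) (at t within S)"
    using has_real_derivative_powr[THEN DERIV_chain2, OF _ inner_deriv, of "c / 2"] assms(2) by simp
  moreover have "inner p p powr (c / 2) = norm p powr c" for p :: 'a
    by (simp add: norm_eq_sqrt_inner powr_half_sqrt[symmetric] powr_powr)
  moreover have "inner (x t) (x t) powr (c / 2 - 1) = norm (x t) powr (c - 2)"
    by (simp add: norm_eq_sqrt_inner powr_half_sqrt[symmetric] powr_powr diff_divide_distrib)
  ultimately show ?thesis by (simp add: mult.assoc)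
qed

lemma increment_ge_of_derivative_ge:
  fixes f f' :: "real \<Rightarrow> real"
  assumes "a \<le> b"
    and "\<And>t. t \<in> {a..b} \<Longrightarrow> (f has_real_derivative f' t) (at t within {a..b})"
    and "\<And>t. t \<in> {a..b} \<Longrightarrow> m \<le> f' t"
  shows "m * (b - a) \<le> f b - f a"
proof -
  obtain z where "z \<in> {a..b}" "f b - f a = f' z * (b - a)"
    using mvt_very_simple[of a b f "\<lambda>t. (*) (f' t)"] assms(1,2)
    by (auto simp: has_field_derivative_def)
  then show ?thesis
    using assms(1,3) by (simp add: mult_right_mono)
qed

lemma increment_le_of_derivative_le:
  fixes f f' :: "real \<Rightarrow> real"
  assumes "a \<le> b"
    and "\<And>t. t \<in> {a..b} \<Longrightarrow> (f has_real_derivative f' t) (at t within {a..b})"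
    and "\<And>t. t \<in> {a..b} \<Longrightarrow> f' t \<le> M"
  shows "f b - f a \<le> M * (b - a)"
proof -
  have "- M * (b - a) \<le> - f b - - f a"
    by (rule increment_ge_of_derivative_ge[where f' = "\<lambda>t. - f' t"]) (use assms in \<open>auto intro: DERIV_minus\<close>)
  then show ?thesis by simp
qed

lemma norm_prod_squared: "(norm p)\<^sup>2 = (fst p)\<^sup>2 + (norm (snd p))\<^sup>2"
  for p :: "real \<times> 'b::euclidean_space"
  by (cases p) (simp add: norm_Pair)

lemma abs_fst_div_norm_le_1: "\<bar>fst p\<bar> / norm p \<le> 1"
  for p :: "real \<times> 'b::euclidean_space"
proof -
  have "\<bar>fst p\<bar> \<le> norm p"
    by (metis abs_le_square_iff abs_norm_cancel le_add_same_cancel1 norm_prod_squared zero_le_power2)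
  then show ?thesis by (auto simp: divide_le_eq_1)
qed

lemma cos_theta: "cos (theta p) = \<bar>fst p\<bar> / norm p"
  for p :: "real \<times> 'b::euclidean_space"
  unfolding theta_def using abs_fst_div_norm_le_1[of p] by (intro cos_arccos) (auto intro: order_trans[of _ 0])

lemma cos_theta_squared: "(cos (theta p))\<^sup>2 = (fst p)\<^sup>2 / (norm p)\<^sup>2"
  for p :: "real \<times> 'b::euclidean_space"
  by (simp add: cos_theta power_divide)

lemma sin_theta_squared: "p \<noteq> 0 \<Longrightarrow> (sin (theta p))\<^sup>2 = (norm (snd p))\<^sup>2 / (norm p)\<^sup>2"
  for p :: "real \<times> 'b::euclidean_space"
proof -
  assume "p \<noteq> 0"
  moreover have "(norm (snd p))\<^sup>2 = (norm p)\<^sup>2 - (fst p)\<^sup>2"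
    using norm_prod_squared[of p] by simp
  ultimately show ?thesis
    by (simp add: sin_squared_eq cos_theta_squared diff_divide_distrib)
qed

lemma tan_theta_nonneg: "0 \<le> tan (theta p)"
  for p :: "real \<times> 'b::euclidean_space"
proof -
  have "0 \<le> theta p" "theta p \<le> pi"
    unfolding theta_def using abs_fst_div_norm_le_1[of p]
    by (auto intro!: arccos_lbound arccos_ubound intro: order_trans[of _ 0])
  then show ?thesis using cos_theta[of p] by (simp add: tan_def sin_ge_zero)
qed

lemma cos_theta_nonzero: "fst p \<noteq> 0 \<Longrightarrow> cos (theta p) \<noteq> 0"
  for p :: "real \<times> 'b::euclidean_space"
  by (cases p) (auto simp: cos_theta zero_prod_def)

lemma xi_tan: "cos (t::real) \<noteq> 0 \<Longrightarrow> xi g b (tan t) = b * (sin t)\<^sup>2 - g * (cos t)\<^sup>2"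
  unfolding xi_def tan_def by (simp add: power_divide field_simps)

lemma sin_cos_squared_combination_bounds:
  fixes t g b a :: real
  assumes "0 \<le> g" "0 \<le> b" "0 \<le> a"
  shows "- g * a \<le> a * (b * (sin t)\<^sup>2 - g * (cos t)\<^sup>2)"
    and "a * (b * (sin t)\<^sup>2 - g * (cos t)\<^sup>2) \<le> b * a"
proof -
  have "g * (cos t)\<^sup>2 \<le> g" "b * (sin t)\<^sup>2 \<le> b"
    using assms abs_cos_le_one[of t] abs_sin_le_one[of t]
    by (auto intro!: mult_left_le simp: abs_square_le_1)
  moreover have "0 \<le> g * (cos t)\<^sup>2" "0 \<le> b * (sin t)\<^sup>2"
    using assms by simp_all
  ultimately have "- g \<le> b * (sin t)\<^sup>2 - g * (cos t)\<^sup>2" "b * (sin t)\<^sup>2 - g * (cos t)\<^sup>2 \<le> b"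
    by linarith+
  then show "- g * a \<le> a * (b * (sin t)\<^sup>2 - g * (cos t)\<^sup>2)"
    and "a * (b * (sin t)\<^sup>2 - g * (cos t)\<^sup>2) \<le> b * a"
    using mult_left_mono assms(3) by (metis mult.commute)+
qed

lemma inner_VF: "inner p (VF a g b p) = norm p powr a * (g * (fst p)\<^sup>2 - b * (norm (snd p))\<^sup>2)"
  for p :: "real \<times> 'b::euclidean_space"
  by (cases p) (simp add: VF_def linA_def power2_eq_square dot_square_norm algebra_simps)

lemma norm_powr_has_derivative_along_VF:
  fixes x :: "real \<Rightarrow> real \<times> 'b::euclidean_space"
  assumes "(x has_vector_derivative VF a g b (x t)) (at t within S)" "x t \<noteq> 0"
  shows "((\<lambda>\<tau>. norm (x \<tau>) powr (-a)) has_real_derivative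
           a * (b * (sin (theta (x t)))\<^sup>2 - g * (cos (theta (x t)))\<^sup>2)) (at t within S)"
proof -
  let ?n = "norm (x t)"
  have powr_cancel: "?n powr (- a - 2) * ?n powr a = 1 / ?n\<^sup>2"
    using assms(2) by (simp add: powr_add[symmetric] powr_minus_divide powr_realpow)
  have "- a * ?n powr (- a - 2) * inner (x t) (VF a g b (x t))
      = - a * (?n powr (- a - 2) * ?n powr a) * (g * (fst (x t))\<^sup>2 - b * (norm (snd (x t)))\<^sup>2)"
    unfolding inner_VF by (simp only: mult.assoc)
  also have "\<dots> = a * (b * (norm (snd (x t)))\<^sup>2 - g * (fst (x t))\<^sup>2) / ?n\<^sup>2"
    unfolding powr_cancel by (simp add: diff_divide_distrib algebra_simps)
  also have "\<dots> = a * (b * (sin (theta (x t)))\<^sup>2 - g * (cos (theta (x t)))\<^sup>2)"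
    using assms(2) by (simp add: sin_theta_squared cos_theta_squared field_simps)
  finally show ?thesis
    using has_real_derivative_norm_powr[OF assms, of "- a"] by simp
qed

lemma cos_theta_squared_has_derivative_along_VF:
  fixes x :: "real \<Rightarrow> real \<times> 'b::euclidean_space"
  assumes "(x has_vector_derivative VF a g b (x t)) (at t within S)" "x t \<noteq> 0"
  shows "((\<lambda>\<tau>. (cos (theta (x \<tau>)))\<^sup>2) has_real_derivative
           2 * (g + b) * norm (x t) powr a * (fst (x t))\<^sup>2 * (norm (snd (x t)))\<^sup>2 / norm (x t) ^ 4)
         (at t within S)"
proof -
  let ?p = "x t"
  have dx: "(x has_derivative (\<lambda>h. h *\<^sub>R VF a g b ?p)) (at t within S)"
    using assms(1) by (simp add: has_vector_derivative_def)
  have fst_deriv: "((\<lambda>\<tau>. fst (x \<tau>)) has_real_derivative norm ?p powr a * (g * fst ?p)) (at t within S)"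
    using has_derivative_fst[OF dx] by (auto intro!: has_derivative_imp_has_field_derivative simp: VF_def linA_def)
  have inner_deriv: "((\<lambda>\<tau>. inner (x \<tau>) (x \<tau>)) has_real_derivative 2 * inner ?p (VF a g b ?p)) (at t within S)"
    using has_derivative_inner[OF dx dx]
    by (auto intro!: has_derivative_imp_has_field_derivative simp: inner_commute)
  have quotient_deriv: "((\<lambda>\<tau>. fst (x \<tau>) * fst (x \<tau>) / inner (x \<tau>) (x \<tau>)) has_real_derivative
      ((norm ?p powr a * (g * fst ?p) * fst ?p + norm ?p powr a * (g * fst ?p) * fst ?p) * inner ?p ?p
         - fst ?p * fst ?p * (2 * inner ?p (VF a g b ?p))) / (inner ?p ?p * inner ?p ?p)) (at t within S)"
    using assms(2) by (intro DERIV_divide DERIV_mult fst_deriv inner_deriv) simp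
  have "(norm ?p powr a * (g * fst ?p) * fst ?p + norm ?p powr a * (g * fst ?p) * fst ?p) * inner ?p ?p
         - fst ?p * fst ?p * (2 * inner ?p (VF a g b ?p))
      = 2 * (g + b) * norm ?p powr a * (fst ?p)\<^sup>2 * (norm (snd ?p))\<^sup>2"
    unfolding inner_VF dot_square_norm norm_prod_squared by (simp add: algebra_simps power2_eq_square)
  moreover have "inner ?p ?p * inner ?p ?p = norm ?p ^ 4"
    by (simp add: dot_square_norm power4_eq_xxxx power2_eq_square)
  moreover have "(\<lambda>\<tau>. fst (x \<tau>) * fst (x \<tau>) / inner (x \<tau>) (x \<tau>)) = (\<lambda>\<tau>. (cos (theta (x \<tau>)))\<^sup>2)"
    unfolding cos_theta_squared by (simp add: power2_eq_square dot_square_norm)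
  ultimately show ?thesis
    using quotient_deriv by simp
qed

lemma norm_powr_has_derivative_along_traj:
  fixes x :: "real \<Rightarrow> real \<times> 'b::euclidean_space"
  assumes "is_traj a g b x T" "\<forall>t\<in>{0..T}. x t \<noteq> 0" "{u..v} \<subseteq> {0..T}" "t \<in> {u..v}"
  shows "((\<lambda>\<tau>. norm (x \<tau>) powr (-a)) has_real_derivative
           a * (b * (sin (theta (x t)))\<^sup>2 - g * (cos (theta (x t)))\<^sup>2)) (at t within {u..v})"
proof -
  have "t \<in> {0..T}" using assms(3,4) by blast
  with assms(1,2) have "(x has_vector_derivative VF a g b (x t)) (at t within {0..T})" "x t \<noteq> 0"
    by (auto simp: is_traj_def)
  from norm_powr_has_derivative_along_VF[OF this] show ?thesis
    by (rule DERIV_subset) (use assms(3) in simp)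
qed

lemma cos_theta_squared_mono_along_traj:
  fixes x :: "real \<Rightarrow> real \<times> 'b::euclidean_space"
  assumes "is_traj a g b x T" "\<forall>t\<in>{0..T}. x t \<noteq> 0" "0 \<le> g" "0 \<le> b"
    and "0 \<le> t1" "t1 \<le> t2" "t2 \<le> T"
  shows "(cos (theta (x t1)))\<^sup>2 \<le> (cos (theta (x t2)))\<^sup>2"
proof -
  have "0 * (t2 - t1) \<le> (cos (theta (x t2)))\<^sup>2 - (cos (theta (x t1)))\<^sup>2"
  proof (rule increment_ge_of_derivative_ge)
    fix t assume t: "t \<in> {t1..t2}"
    have "t \<in> {0..T}" using assms t by auto
    with assms(1,2) have "(x has_vector_derivative VF a g b (x t)) (at t within {0..T})" "x t \<noteq> 0"
      by (auto simp: is_traj_def)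
    from cos_theta_squared_has_derivative_along_VF[OF this]
    show "((\<lambda>\<tau>. (cos (theta (x \<tau>)))\<^sup>2) has_real_derivative
        2 * (g + b) * norm (x t) powr a * (fst (x t))\<^sup>2 * (norm (snd (x t)))\<^sup>2 / norm (x t) ^ 4)
        (at t within {t1..t2})"
      by (rule DERIV_subset) (use assms in auto)
  qed (use assms in auto)
  then show ?thesis by simp
qed

lemma norm_powr_upper_bounds_along_traj:
  fixes x :: "real \<Rightarrow> real \<times> 'b::euclidean_space"
  assumes traj: "is_traj a g b x T" "\<forall>t\<in>{0..T}. x t \<noteq> 0"
    and "0 < a" "0 \<le> g" "0 \<le> b" "t \<in> {0..T}"
  shows "norm (x t) powr (-a) \<le> norm (x T) powr (-a) + g * a * (T - t)"
    and "norm (x t) powr (-a) \<le> norm (x 0) powr (-a) + b * a * t"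
proof -
  let ?f = "\<lambda>\<tau>. norm (x \<tau>) powr (-a)"
  let ?rate = "\<lambda>\<tau>. a * (b * (sin (theta (x \<tau>)))\<^sup>2 - g * (cos (theta (x \<tau>)))\<^sup>2)"
  have rate_bounds: "- g * a \<le> ?rate \<tau>" "?rate \<tau> \<le> b * a" for \<tau>
    using sin_cos_squared_combination_bounds assms(3-5) by simp_all
  have "- g * a * (T - t) \<le> ?f T - ?f t"
    by (rule increment_ge_of_derivative_ge[where f' = ?rate])
      (use assms(6) rate_bounds in \<open>auto intro: norm_powr_has_derivative_along_traj[OF traj]\<close>)
  moreover have "?f t - ?f 0 \<le> b * a * (t - 0)"
    by (rule increment_le_of_derivative_le[where f' = ?rate])
      (use assms(6) rate_bounds in \<open>auto intro: norm_powr_has_derivative_along_traj[OF traj]\<close>)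
  ultimately show "?f t \<le> ?f T + g * a * (T - t)" "?f t \<le> ?f 0 + b * a * t"
    by simp_all
qed

lemma norm_powr_lower_bounds_along_traj:
  fixes x :: "real \<Rightarrow> real \<times> 'b::euclidean_space"
  assumes traj: "is_traj a g b x T" "\<forall>t\<in>{0..T}. x t \<noteq> 0"
    and "0 < a" "0 \<le> g" "0 \<le> b" "Ts \<in> {0..T}" "cos (theta (x Ts)) \<noteq> 0"
  shows "t \<in> {0..Ts} \<Longrightarrow>
           norm (x 0) powr (-a) + a * xi g b (tan (theta (x Ts))) * t \<le> norm (x t) powr (-a)"
    and "t \<in> {Ts..T} \<Longrightarrow>
           norm (x T) powr (-a) - a * xi g b (tan (theta (x Ts))) * (T - t) \<le> norm (x t) powr (-a)"
proof -
  let ?f = "\<lambda>\<tau>. norm (x \<tau>) powr (-a)"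
  let ?rate = "\<lambda>\<tau>. a * (b * (sin (theta (x \<tau>)))\<^sup>2 - g * (cos (theta (x \<tau>)))\<^sup>2)"
  have rate_antimono: "?rate t2 \<le> ?rate t1" if "0 \<le> t1" "t1 \<le> t2" "t2 \<le> T" for t1 t2
  proof -
    have "?rate \<tau> = a * (b - (b + g) * (cos (theta (x \<tau>)))\<^sup>2)" for \<tau>
      by (simp add: sin_squared_eq algebra_simps)
    then show ?thesis
      using cos_theta_squared_mono_along_traj[OF traj assms(4,5) that] assms(3-5)
      by (simp add: mult_left_mono)
  qed
  have xi_rate: "a * xi g b (tan (theta (x Ts))) = ?rate Ts"
    using xi_tan[OF assms(7)] by simp
  show "?f 0 + a * xi g b (tan (theta (x Ts))) * t \<le> ?f t" if "t \<in> {0..Ts}"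
  proof -
    have "a * xi g b (tan (theta (x Ts))) * (t - 0) \<le> ?f t - ?f 0"
      unfolding xi_rate
      by (rule increment_ge_of_derivative_ge[where f' = ?rate])
        (use that assms(6) in \<open>auto intro: norm_powr_has_derivative_along_traj[OF traj] rate_antimono\<close>)
    then show ?thesis by simp
  qed
  show "?f T - a * xi g b (tan (theta (x Ts))) * (T - t) \<le> ?f t" if "t \<in> {Ts..T}"
  proof -
    have "?f T - ?f t \<le> a * xi g b (tan (theta (x Ts))) * (T - t)"
      unfolding xi_rate
      by (rule increment_le_of_derivative_le[where f' = ?rate])
        (use that assms(6) in \<open>auto intro: norm_powr_has_derivative_along_traj[OF traj] rate_antimono\<close>)
    then show ?thesis by simp
  qed
qed

theorem lemma7p2:
  fixes \<alpha> \<gamma> \<beta> r0 :: real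
  assumes "0 < \<alpha>" "\<alpha> < 1" "0 < \<gamma>" "0 < \<beta>" "0 < r0"
  shows
   "(\<forall>(x :: real \<Rightarrow> real \<times> 'b::euclidean_space) T.
       is_traj \<alpha> \<gamma> \<beta> x T \<and> (\<forall>t\<in>{0..T}. x t \<in> ball 0 r0 \<and> x t \<noteq> 0) \<longrightarrow>
       (\<forall>t\<in>{0..T}.
          ((\<lambda>\<tau>. norm (x \<tau>) powr (-\<alpha>)) has_real_derivative
              \<alpha> * (\<beta> * (sin (theta (x t)))\<^sup>2 - \<gamma> * (cos (theta (x t)))\<^sup>2)) (at t within {0..T})
        \<and> (fst (x t) \<noteq> 0 \<longrightarrow>
              \<alpha> * (\<beta> * (sin (theta (x t)))\<^sup>2 - \<gamma> * (cos (theta (x t)))\<^sup>2)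
                = \<alpha> * xi \<gamma> \<beta> (tan (theta (x t))))
        \<and> - \<gamma> * \<alpha> \<le> \<alpha> * (\<beta> * (sin (theta (x t)))\<^sup>2 - \<gamma> * (cos (theta (x t)))\<^sup>2)
        \<and> \<alpha> * (\<beta> * (sin (theta (x t)))\<^sup>2 - \<gamma> * (cos (theta (x t)))\<^sup>2) \<le> \<beta> * \<alpha>
        \<and> norm (x t) powr (-\<alpha>) \<le> norm (x T) powr (-\<alpha>) + \<gamma> * \<alpha> * (T - t)
        \<and> norm (x t) powr (-\<alpha>) \<le> norm (x 0) powr (-\<alpha>) + \<beta> * \<alpha> * t))
  \<and> (\<forall>(x :: real \<Rightarrow> real \<times> 'b::euclidean_space) T0 s Ts.
       is_traj \<alpha> \<gamma> \<beta> x T0 \<and> 0 < T0 \<and> (\<forall>t\<in>{0<..<T0}. x t \<in> ball 0 r0 \<and> x t \<noteq> 0)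
       \<and> norm (x 0) = r0 \<and> norm (x T0) = r0
       \<and> tan (theta (x 0)) > s \<and> s > tan (theta (x T0))
       \<and> Ts \<in> {0..T0} \<and> tan (theta (x Ts)) = s \<longrightarrow>
       (\<forall>t\<in>{0..Ts}. norm (x t) powr (-\<alpha>) \<ge> r0 powr (-\<alpha>) + \<alpha> * xi \<gamma> \<beta> s * t)
       \<and> (\<forall>t\<in>{Ts..T0}. norm (x t) powr (-\<alpha>) \<ge> r0 powr (-\<alpha>) - \<alpha> * xi \<gamma> \<beta> s * (T0 - t)))"
  apply (rule conjI; intro allI impI; elim conjE)
  subgoal premises prems for x T
  proof -
    have nonzero: "\<forall>t\<in>{0..T}. x t \<noteq> 0" using prems(2) by blast
    have "\<alpha> * (\<beta> * (sin (theta p))\<^sup>2 - \<gamma> * (cos (theta p))\<^sup>2) = \<alpha> * xi \<gamma> \<beta> (tan (theta p))"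
      if "fst p \<noteq> 0" for p :: "real \<times> 'b"
      using xi_tan[OF cos_theta_nonzero[OF that]] by simp
    then show ?thesis
      using norm_powr_has_derivative_along_traj[OF prems(1) nonzero order_refl]
        norm_powr_upper_bounds_along_traj[OF prems(1) nonzero assms(1)] assms(1,3,4)
        sin_cos_squared_combination_bounds[of \<gamma> \<beta> \<alpha>]
      by simp
  qed
  subgoal premises prems for x T0 s Ts
  proof -
    have nonzero: "\<forall>t\<in>{0..T0}. x t \<noteq> 0"
      using prems assms(5) by (force simp: le_less)
    \<comment> \<open>\<open>tan\<close> is \<open>0\<close> where \<open>cos\<close> vanishes, whereas \<open>s > tan (theta (x T0)) \<ge> 0\<close>.\<close>
    have "cos (theta (x Ts)) \<noteq> 0"
      using prems tan_theta_nonneg[of "x T0"] by (auto simp: tan_def)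
    then show ?thesis
      using norm_powr_lower_bounds_along_traj[OF prems(1) nonzero assms(1) _ _ prems(8)] assms(3,4) prems
      by auto
  qed
  done

end
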